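(* Let $n \geq 2$, let $P_n$ be the path with $n$ vertices, and let $B_n$ be the barbell graph consisting of two disjoint cliques of sizes $\lceil n/2\rceil$ and $\lfloor n/2\rfloor$ connected by a single edge. Then $\mathcal{AC}(P_n) = \mathcal{AC}(B_n) = n-2$.
   Context: Acquaintance time: Let $G=(V,E)$ be a finite connected graph. Initially one agent is placed on each vertex. At any moment, two agents located at the endpoints of a common edge become acquainted (in particular, agents on adjacent vertices at the start are acquainted). In each round one chooses a matching of $G$ (not necessarily maximal), and for every edge of the matching the two agents on its endpoints swap places; after each round, all pairs of agents on adjacent vertices become acquainted. A sequence of matchings after which every pair of agents has been acquainted is a strategy for acquaintance in $G$. The acquaintance time $\mathcal{AC}(G)$ is the minimal number of rounds in a strategy for acquaintance in $G$. *)

theory Defs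
  imports Main
begin

text \<open>A graph is given by a finite vertex set V and a symmetric irreflexive
  adjacency relation E. Agents are identified with their initial vertices.
  A matching is encoded as the involution m on V that swaps the two endpoints
  of every matching edge and fixes unmatched vertices.\<close>

definition is_matching_perm :: "'a set \<Rightarrow> ('a \<Rightarrow> 'a \<Rightarrow> bool) \<Rightarrow> ('a \<Rightarrow> 'a) \<Rightarrow> bool" where
  "is_matching_perm V E m \<longleftrightarrow>
     (\<forall>v\<in>V. m v \<in> V \<and> m (m v) = v \<and> (m v = v \<or> E v (m v))) \<and>
     (\<forall>v. v \<notin> V \<longrightarrow> m v = v)"

text \<open>pos ms k v = the agent located at vertex v after k rounds.\<close>
fun pos :: "(nat \<Rightarrow> 'a \<Rightarrow> 'a) \<Rightarrow> nat \<Rightarrow> 'a \<Rightarrow> 'a" where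
  "pos ms 0 = id"
| "pos ms (Suc k) = pos ms k \<circ> ms k"

definition is_acq_strategy :: "'a set \<Rightarrow> ('a \<Rightarrow> 'a \<Rightarrow> bool) \<Rightarrow> (nat \<Rightarrow> 'a \<Rightarrow> 'a) \<Rightarrow> nat \<Rightarrow> bool" where
  "is_acq_strategy V E ms t \<longleftrightarrow>
     (\<forall>k<t. is_matching_perm V E (ms k)) \<and>
     (\<forall>a\<in>V. \<forall>b\<in>V. a \<noteq> b \<longrightarrow>
        (\<exists>k\<le>t. \<exists>u\<in>V. \<exists>v\<in>V. E u v \<and> pos ms k u = a \<and> pos ms k v = b))"

definition acquaintance_time :: "'a set \<Rightarrow> ('a \<Rightarrow> 'a \<Rightarrow> bool) \<Rightarrow> nat" where
  "acquaintance_time V E = (LEAST t. \<exists>ms. is_acq_strategy V E ms t)"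

definition path_adj :: "nat \<Rightarrow> nat \<Rightarrow> nat \<Rightarrow> bool" where
  "path_adj n u v \<longleftrightarrow> u < n \<and> v < n \<and> (u + 1 = v \<or> v + 1 = u)"

definition barbell_adj :: "nat \<Rightarrow> nat \<Rightarrow> nat \<Rightarrow> bool" where
  "barbell_adj n u v \<longleftrightarrow> u < n \<and> v < n \<and> u \<noteq> v \<and>
     (let c = (n + 1) div 2 in
       (u < c \<and> v < c) \<or> (c \<le> u \<and> c \<le> v) \<or>
       (u = c - 1 \<and> v = c) \<or> (u = c \<and> v = c - 1))"

end

theory Submission
  imports Defs
begin

text \<open>Upper bound: under odd-even transposition on the path, agents starting on even
  vertices sweep right and those on odd vertices sweep left, each reflected at the end, so
  any two agents are adjacent within \<open>n - 2\<close> rounds. The path is a spanning subgraph of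
  the barbell, so the same strategy works there.

  Lower bound: let the cliques \<open>L\<close> and \<open>R\<close> of the barbell be joined by the bridge
  \<open>l r\<close>. An agent of \<open>L\<close> that ever enters \<open>R\<close> first does so across the bridge, sitting
  on \<open>l\<close> and then on \<open>r\<close> at two consecutive times; an agent that never leaves \<open>L\<close> can
  meet one that never leaves \<open>R\<close> only across the bridge. All these times are distinct, so
  counting them in \<open>{0..t}\<close> gives \<open>2 \<alpha> + p q \<le> t + 1\<close>, where \<open>\<alpha>\<close> agents of \<open>L\<close>
  cross and \<open>p\<close>, \<open>q\<close> agents stay on the two sides. With the symmetric bound, and \<open>L\<close>
  and \<open>R\<close> of nearly equal size, this forces \<open>n \<le> t + 2\<close>.\<close>

lemma is_matching_perm_bij_betw:
  "is_matching_perm V E m \<Longrightarrow> bij_betw m V V"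
  unfolding is_matching_perm_def by (intro bij_betw_byWitness[where f' = m]) auto

lemma is_acq_strategy_pos_bij_betw:
  assumes "is_acq_strategy V E ms t" "k \<le> t"
  shows "bij_betw (pos ms k) V V"
  using assms(2)
proof (induction k)
  case 0
  show ?case by (simp add: bij_betw_def)
next
  case (Suc k)
  have "is_matching_perm V E (ms k)"
    using assms(1) Suc.prems unfolding is_acq_strategy_def by simp
  then have "bij_betw (ms k) V V" by (rule is_matching_perm_bij_betw)
  moreover have "bij_betw (pos ms k) V V" using Suc by simp
  ultimately show ?case by (simp only: pos.simps bij_betw_trans)
qed

lemma is_acq_strategy_mono:
  assumes "\<And>u v. E u v \<Longrightarrow> E' u v" "is_acq_strategy V E ms t"
  shows "is_acq_strategy V E' ms t"
  using assms unfolding is_acq_strategy_def is_matching_perm_def by meson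

lemma acquaintance_time_eqI:
  assumes "is_acq_strategy V E ms t" "\<And>ms' t'. is_acq_strategy V E ms' t' \<Longrightarrow> t \<le> t'"
  shows "acquaintance_time V E = t"
  unfolding acquaintance_time_def using assms by (intro Least_equality) blast+

definition path_swap :: "nat \<Rightarrow> nat \<Rightarrow> nat \<Rightarrow> nat" where
  "path_swap n k v =
     (if v < n then if even (v + k) then if v + 1 < n then v + 1 else v
                    else if 0 < v then v - 1 else v
      else v)"

text \<open>The vertex of agent \<open>a\<close> after \<open>k \<le> n\<close> rounds of \<open>path_swap\<close>: an even agent walks
  right, waits one round at \<open>n - 1\<close> and walks back; an odd agent walks left, waits one round
  at \<open>0\<close> and walks back.\<close>
definition trajectory :: "nat \<Rightarrow> nat \<Rightarrow> nat \<Rightarrow> nat" where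
  "trajectory n a k =
     (if even a then if a + k < n then a + k else 2 * n - 1 - a - k
      else if k \<le> a then a - k else k - a - 1)"

lemma path_swap_is_matching_perm: "is_matching_perm {0..<n} (path_adj n) (path_swap n k)"
  unfolding is_matching_perm_def path_swap_def path_adj_def by auto

lemma trajectory_less: "a < n \<Longrightarrow> k \<le> n \<Longrightarrow> trajectory n a k < n"
  unfolding trajectory_def by auto

lemma path_swap_trajectory_Suc:
  assumes "a < n" "k < n"
  shows "path_swap n k (trajectory n a (Suc k)) = trajectory n a k"
proof (cases "even a")
  case True
  then show ?thesis using assms unfolding path_swap_def trajectory_def
    by (cases "a + k + 1 < n") (auto; presburger)+
next
  case False
  then show ?thesis using assms unfolding path_swap_def trajectory_def
    by (cases "k < a") (auto; presburger)+
qed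

lemma pos_path_swap_trajectory: "a < n \<Longrightarrow> k \<le> n \<Longrightarrow> pos (path_swap n) k (trajectory n a k) = a"
proof (induction k)
  case 0
  then show ?case by (simp add: trajectory_def)
next
  case (Suc k)
  then show ?case by (simp add: path_swap_trajectory_Suc)
qed

lemma trajectories_meet:
  assumes "a < b" "b < n"
  shows "\<exists>k\<le>n - 2. path_adj n (trajectory n a k) (trajectory n b k)"
proof -
  have meet_at: "\<exists>k\<le>n - 2. path_adj n (trajectory n a k) (trajectory n b k)"
    if "k \<le> n - 2" "trajectory n b k = trajectory n a k + 1" "trajectory n b k < n" for k
    using that unfolding path_adj_def by auto
  show ?thesis
  proof (cases "b = a + 1")
    case True
    then show ?thesis using assms by (intro meet_at[of 0]) (auto simp: trajectory_def)
  next
    case False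
    obtain i j where "a = 2 * i \<or> a = 2 * i + 1" "b = 2 * j \<or> b = 2 * j + 1"
      by (metis evenE oddE)
    then consider "a = 2 * i" "b = 2 * j" | "a = 2 * i" "b = 2 * j + 1"
      | "a = 2 * i + 1" "b = 2 * j" | "a = 2 * i + 1" "b = 2 * j + 1" by blast
    then show ?thesis
    proof cases
      case 1
      then show ?thesis
        using assms False by (intro meet_at[of "n - 1 - i - j"]) (auto simp: trajectory_def)
    next
      case 2
      then show ?thesis
        using assms False by (intro meet_at[of "j - i"]) (auto simp: trajectory_def)
    next
      case 3
      then show ?thesis
        using assms False by (intro meet_at[of "n - j + i"]) (auto simp: trajectory_def)
    next
      case 4
      then show ?thesis
        using assms False by (intro meet_at[of "i + j + 1"]) (auto simp: trajectory_def)
    qed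
  qed
qed

lemma path_adj_commute: "path_adj n u v \<longleftrightarrow> path_adj n v u"
  unfolding path_adj_def by auto

lemma path_adj_imp_barbell_adj: "path_adj n u v \<Longrightarrow> barbell_adj n u v"
  unfolding path_adj_def barbell_adj_def Let_def by auto

lemma path_swap_acq_strategy: "is_acq_strategy {0..<n} (path_adj n) (path_swap n) (n - 2)"
  unfolding is_acq_strategy_def
proof (intro conjI allI impI ballI path_swap_is_matching_perm)
  fix a b assume ab: "a \<in> {0..<n}" "b \<in> {0..<n}" "a \<noteq> b"
  then consider "a < b" | "b < a" by fastforce
  then obtain k where k: "k \<le> n - 2" "path_adj n (trajectory n a k) (trajectory n b k)"
    using trajectories_meet[of a b n] trajectories_meet[of b a n] ab path_adj_commute
    by (cases; simp) blast+
  then show "\<exists>k\<le>n - 2. \<exists>u\<in>{0..<n}. \<exists>v\<in>{0..<n}.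
      path_adj n u v \<and> pos (path_swap n) k u = a \<and> pos (path_swap n) k v = b"
    using ab by (intro exI[of _ k] conjI bexI[of _ "trajectory n a k"] bexI[of _ "trajectory n b k"])
      (simp_all add: trajectory_less pos_path_swap_trajectory)
qed

definition crossers :: "(nat \<Rightarrow> 'a \<Rightarrow> 'a) \<Rightarrow> nat \<Rightarrow> 'a set \<Rightarrow> 'a set \<Rightarrow> 'a set" where
  "crossers ms t L R = {a \<in> L. \<exists>k\<le>t. a \<in> pos ms k ` R}"

locale bridged_strategy =
  fixes V :: "'a set" and E :: "'a \<Rightarrow> 'a \<Rightarrow> bool" and L R :: "'a set" and l r :: 'a
    and ms :: "nat \<Rightarrow> 'a \<Rightarrow> 'a" and t :: nat
  assumes finite_vertices: "finite V"
    and vertices_split: "V = L \<union> R" and sides_disjoint: "L \<inter> R = {}"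
    and bridge_ends: "l \<in> L" "r \<in> R"
    and only_bridge: "\<And>u v. u \<in> L \<Longrightarrow> v \<in> R \<Longrightarrow> E u v \<or> E v u \<Longrightarrow> u = l \<and> v = r"
    and strategy: "is_acq_strategy V E ms t"
begin

lemma bridged_strategy_swap: "bridged_strategy V E R L r l ms t"
  by unfold_locales
    (use finite_vertices vertices_split sides_disjoint bridge_ends strategy only_bridge in blast)+

lemma pos_bij_betw: "k \<le> t \<Longrightarrow> bij_betw (pos ms k) V V"
  using strategy by (rule is_acq_strategy_pos_bij_betw)

lemma on_left_iff_not_on_right:
  assumes "k \<le> t" "a \<in> V"
  shows "a \<in> pos ms k ` L \<longleftrightarrow> a \<notin> pos ms k ` R"
proof -
  have "pos ms k ` L \<union> pos ms k ` R = V" "pos ms k ` L \<inter> pos ms k ` R = {}"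
    using pos_bij_betw[OF assms(1)] vertices_split sides_disjoint
      inj_on_image_Int[of "pos ms k" V L R]
    by (auto simp: bij_betw_def)
  then show ?thesis using assms(2) by blast
qed

lemma crossing_round:
  assumes "k < t" "a \<in> pos ms k ` L" "a \<in> pos ms (Suc k) ` R"
  shows "pos ms k l = a" "ms k l = r" "ms k r = l"
proof -
  obtain w v where w: "w \<in> L" "pos ms k w = a" and v: "v \<in> R" "pos ms k (ms k v) = a"
    using assms(2,3) by auto
  have m: "is_matching_perm V E (ms k)"
    using strategy assms(1) unfolding is_acq_strategy_def by blast
  then have "ms k v \<in> V" "ms k (ms k v) = v" "ms k v = v \<or> E v (ms k v)"
    using v vertices_split unfolding is_matching_perm_def by auto
  moreover have "ms k v = w"
    using pos_bij_betw[of k] assms(1) w v \<open>ms k v \<in> V\<close> vertices_split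
    unfolding bij_betw_def inj_on_def by auto
  ultimately have "E v w" using w v sides_disjoint by auto
  then have "w = l" "v = r" using only_bridge w v by blast+
  then show "pos ms k l = a" "ms k r = l" "ms k l = r"
    using w \<open>ms k v = w\<close> \<open>ms k (ms k v) = v\<close> by auto
qed

definition first_crossing :: "'a \<Rightarrow> nat" where
  "first_crossing a = (LEAST k. a \<in> pos ms (Suc k) ` R)"

lemma first_crossing:
  assumes "a \<in> crossers ms t L R"
  shows "first_crossing a < t" "pos ms (first_crossing a) l = a"
    "ms (first_crossing a) l = r" "ms (first_crossing a) r = l"
    "\<And>k. k \<le> first_crossing a \<Longrightarrow> a \<notin> pos ms k ` R"
proof -
  obtain k where a: "a \<in> L" and k: "k \<le> t" "a \<in> pos ms k ` R"
    using assms unfolding crossers_def by blast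
  have not_right_0: "a \<notin> pos ms 0 ` R" using a sides_disjoint by auto
  then obtain k' where k': "k = Suc k'" using k(2) by (cases k) auto
  have crossed: "a \<in> pos ms (Suc (first_crossing a)) ` R"
    unfolding first_crossing_def using k(2) k' by (auto intro: LeastI)
  show lt: "first_crossing a < t"
    using Least_le[of "\<lambda>j. a \<in> pos ms (Suc j) ` R" k'] k k' unfolding first_crossing_def by simp
  show before: "a \<notin> pos ms j ` R" if "j \<le> first_crossing a" for j
  proof (cases j)
    case (Suc j')
    then have "j' < first_crossing a" using that by simp
    then show ?thesis using Suc not_less_Least unfolding first_crossing_def by blast
  qed (use not_right_0 in simp)
  have "a \<in> pos ms (first_crossing a) ` L"
    using on_left_iff_not_on_right[of "first_crossing a" a] before[of "first_crossing a"] lt a vertices_split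
    by auto
  then show "pos ms (first_crossing a) l = a" "ms (first_crossing a) l = r" "ms (first_crossing a) r = l"
    using crossing_round[OF lt _ crossed] by auto
qed

lemma stayers_meet_on_bridge:
  assumes "x \<in> L - crossers ms t L R" "y \<in> R - crossers ms t R L"
  shows "\<exists>k\<le>t. pos ms k l = x \<and> pos ms k r = y"
proof -
  have "x \<noteq> y" "x \<in> V" "y \<in> V" using assms vertices_split sides_disjoint by auto
  then obtain k u v where k: "k \<le> t" "u \<in> V" "v \<in> V" "E u v" "pos ms k u = x" "pos ms k v = y"
    using strategy unfolding is_acq_strategy_def by blast
  have "u \<in> L" "v \<in> R"
    using k assms vertices_split unfolding crossers_def by auto
  then have "u = l" "v = r" using only_bridge k(4) by blast+
  then show ?thesis using k by blast
qed

lemma crossers_stayers_card_le: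
  "2 * card (crossers ms t L R) + card (L - crossers ms t L R) * card (R - crossers ms t R L) \<le> Suc t"
proof -
  let ?A = "crossers ms t L R" and ?P = "L - crossers ms t L R" and ?Q = "R - crossers ms t R L"
  let ?T1 = "first_crossing ` ?A" and ?T2 = "Suc ` first_crossing ` ?A"
  define bridge_times where "bridge_times = {k. k \<le> t \<and> pos ms k l \<in> ?P \<and> pos ms k r \<in> ?Q}"
  have "?A \<subseteq> L" unfolding crossers_def by blast
  have inj: "inj_on first_crossing ?A"
    by (rule inj_onI) (metis first_crossing(2))
  txt \<open>The agent on \<open>l\<close> just after the crossing of \<open>a'\<close> was on \<open>r\<close> at the crossing.\<close>
  have "?T1 \<inter> ?T2 = {}"
  proof (rule equals0I)
    fix k assume "k \<in> ?T1 \<inter> ?T2"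
    then obtain a a' where a: "a \<in> ?A" "a' \<in> ?A" "first_crossing a = Suc (first_crossing a')"
      by auto
    then have "pos ms (first_crossing a') r = a"
      using first_crossing(2,3)[of a] first_crossing(3)[of a'] by simp
    then show False
      using first_crossing(5)[OF a(1), of "first_crossing a'"] a(3) bridge_ends by auto
  qed
  moreover have "?T1 \<inter> bridge_times = {}"
    using first_crossing(2) unfolding bridge_times_def by auto
  moreover have "?T2 \<inter> bridge_times = {}"
    using first_crossing(2,4) \<open>?A \<subseteq> L\<close> sides_disjoint unfolding bridge_times_def by auto
  moreover have "?T1 \<union> ?T2 \<union> bridge_times \<subseteq> {..t}"
    using first_crossing(1) unfolding bridge_times_def by (fastforce intro: less_imp_le Suc_leI)
  ultimately have "card ?T1 + card ?T2 + card bridge_times \<le> Suc t"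
    by (metis card_Un_disjoint card_atMost card_mono finite_Un finite_atMost finite_subset Int_Un_distrib2 Un_empty)
  moreover have "card ?T1 = card ?A" "card ?T2 = card ?A"
    using inj by (simp_all add: card_image)
  moreover have "card (?P \<times> ?Q) \<le> card bridge_times"
  proof (rule surj_card_le)
    show "finite bridge_times" unfolding bridge_times_def by simp
    show "?P \<times> ?Q \<subseteq> (\<lambda>k. (pos ms k l, pos ms k r)) ` bridge_times"
      using stayers_meet_on_bridge unfolding bridge_times_def by fastforce
  qed
  ultimately show ?thesis by (simp add: card_cartesian_product)
qed

lemma length_ge:
  assumes "card V \<le> 2 * card L + 1" "card V \<le> 2 * card R + 1"
  shows "card V \<le> t + 2"
proof -
  interpret swapped: bridged_strategy V E R L r l ms t by (rule bridged_strategy_swap)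
  define \<alpha> where "\<alpha> = card (crossers ms t L R)"
  define \<beta> where "\<beta> = card (crossers ms t R L)"
  define p where "p = card (L - crossers ms t L R)"
  define q where "q = card (R - crossers ms t R L)"
  have bound_L: "2 * \<alpha> + p * q \<le> t + 1" and bound_R: "2 * \<beta> + q * p \<le> t + 1"
    using crossers_stayers_card_le swapped.crossers_stayers_card_le
    unfolding \<alpha>_def \<beta>_def p_def q_def by simp_all
  have "finite L" "finite R" using finite_vertices vertices_split by auto
  then have "card L = \<alpha> + p" "card R = \<beta> + q" "card V = card L + card R"
    unfolding \<alpha>_def \<beta>_def p_def q_def crossers_def
    using vertices_split sides_disjoint
    by (auto simp: card_Un_disjoint card_Diff_subset card_mono intro!: le_add_diff_inverse[symmetric])
  show ?thesis
  proof (cases "p = 0 \<or> q = 0")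
    case True
    then show ?thesis using assms bound_L bound_R \<open>card L = \<alpha> + p\<close> \<open>card R = \<beta> + q\<close> by auto
  next
    case False
    then have "p + q \<le> p * q + 1" by (cases p; cases q) auto
    then show ?thesis
      using bound_L bound_R \<open>card L = \<alpha> + p\<close> \<open>card R = \<beta> + q\<close> \<open>card V = card L + card R\<close>
      by (simp add: mult.commute)
  qed
qed

end

lemma barbell_strategy_length_ge:
  assumes "2 \<le> n" "is_acq_strategy {0..<n} (barbell_adj n) ms t"
  shows "n \<le> t + 2"
proof -
  define c where "c = (n + 1) div 2"
  interpret bridged_strategy "{0..<n}" "barbell_adj n" "{0..<c}" "{c..<n}" "c - 1" c ms t
    using assms unfolding c_def by unfold_locales (auto simp: barbell_adj_def Let_def)
  show ?thesis using length_ge unfolding c_def by simp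
qed

theorem theorem3p1:
  fixes n :: nat
  assumes "n \<ge> 2"
  shows "acquaintance_time {0..<n} (path_adj n) = n - 2
       \<and> acquaintance_time {0..<n} (barbell_adj n) = n - 2"
proof -
  have path_strategy: "is_acq_strategy {0..<n} (path_adj n) (path_swap n) (n - 2)"
    by (rule path_swap_acq_strategy)
  have to_barbell: "is_acq_strategy {0..<n} (barbell_adj n) ms t"
    if "is_acq_strategy {0..<n} (path_adj n) ms t" for ms t
    using path_adj_imp_barbell_adj that by (rule is_acq_strategy_mono)
  have barbell_lower: "n - 2 \<le> t" if "is_acq_strategy {0..<n} (barbell_adj n) ms t" for ms t
    using barbell_strategy_length_ge[OF assms that] by simp
  have "acquaintance_time {0..<n} (path_adj n) = n - 2"
    using path_strategy by (rule acquaintance_time_eqI) (rule barbell_lower[OF to_barbell])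
  moreover have "acquaintance_time {0..<n} (barbell_adj n) = n - 2"
    using to_barbell[OF path_strategy] by (rule acquaintance_time_eqI) (rule barbell_lower)
  ultimately show ?thesis ..
qed

end
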